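(* Assume that $n = 2$. Then for any $k \ge 0$ (and any $\ell \in \mathbb{N}$), the following formula holds in $V_2$: \begin{equation*} (r + k,\ell) = \sum_{s=1}^r(-1)^{s-1} \begin{bmatrix} s + k - 1 \\ s -1 \end{bmatrix} \begin{bmatrix} r + k \\ r - s \end{bmatrix}(r - s, \ell + s + k). \end{equation*}
   Context: Let $q$ be an indeterminate, $[n] = \frac{q^n - q^{-n}}{q - q^{-1}}$ for $n \in \mathbb{Z}$, $[m]^! = [1][2]\cdots[m]$, and for $n \in \mathbb{Z}$, $m \in \mathbb{N}$, $\begin{bmatrix} n \\ m\end{bmatrix} = \frac{[n][n-1]\cdots[n-m+1]}{[m]^!}$ for $m \ge 1$, $\begin{bmatrix} n \\ 0\end{bmatrix} = 1$. Fix an integer $r \ge 2$. Let $V_n$ be the vector space over $\mathbb{Q}(q)$ spanned by symbols $a = (a_1, \dots, a_n) \in \mathbb{N}^n$ subject to the following relations: for $1 \le i \le n-1$, if $a_i \ge r$ then $\sum_{0 \le j \le r}(-1)^j\begin{bmatrix} r \\ j\end{bmatrix} a(j) = 0$, where $a(j) = (a_1, \dots, a_{i-1}, a_i - j, a_{i+1} + j, a_{i+2}, \dots, a_n)$ (so $a(0) = a$). In particular for $n = 2$ the relation reads $\sum_{j=0}^r (-1)^j\begin{bmatrix} r \\ j\end{bmatrix}(a_1 - j, a_2 + j) = 0$ whenever $a_1 \ge r$. *)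

theory Defs
  imports "HOL-Computational_Algebra.Computational_Algebra"
begin

type_synonym qfield = "rat poly fract"

definition qq :: qfield where
  "qq = Fract [:0, 1:] 1"

definition qint :: "int \<Rightarrow> qfield" where
  "qint n = (qq powi n - qq powi (- n)) / (qq - inverse qq)"

definition qfact :: "nat \<Rightarrow> qfield" where
  "qfact m = (\<Prod>i\<in>{1..m}. qint (int i))"

definition qbinom :: "int \<Rightarrow> nat \<Rightarrow> qfield" where
  "qbinom n m = (\<Prod>i<m. qint (n - int i)) / qfact m"

text \<open>Free vector space on symbols (a_1,...,a_n) (lists of naturals): elements are
  functions from symbols to coefficients (finite support throughout below).
  The basis vector of a symbol a:\<close>
definition vsym :: "nat list \<Rightarrow> nat list \<Rightarrow> qfield" where
  "vsym a = (\<lambda>b. if b = a then 1 else 0)"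

text \<open>a(j) at position i (0-based: positions i, i+1).\<close>
definition shift :: "nat list \<Rightarrow> nat \<Rightarrow> nat \<Rightarrow> nat list" where
  "shift a i j = a[i := a ! i - j, Suc i := a ! Suc i + j]"

definition relvec :: "nat \<Rightarrow> nat list \<Rightarrow> nat \<Rightarrow> nat list \<Rightarrow> qfield" where
  "relvec r a i = (\<lambda>b. \<Sum>j\<le>r. (-1) ^ j * qbinom (int r) j * vsym (shift a i j) b)"

inductive_set relspan :: "nat \<Rightarrow> nat \<Rightarrow> (nat list \<Rightarrow> qfield) set" for r n where
  zero: "(\<lambda>b. 0) \<in> relspan r n"
| rel: "\<lbrakk>length a = n; Suc i < n; r \<le> a ! i\<rbrakk> \<Longrightarrow> relvec r a i \<in> relspan r n"
| add: "\<lbrakk>v \<in> relspan r n; w \<in> relspan r n\<rbrakk> \<Longrightarrow> (\<lambda>b. v b + w b) \<in> relspan r n"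
| smult: "v \<in> relspan r n \<Longrightarrow> (\<lambda>b. c * v b) \<in> relspan r n"

text \<open>Equality in V_n = quotient of the free space by the relation span.\<close>
definition Veq :: "nat \<Rightarrow> nat \<Rightarrow> (nat list \<Rightarrow> qfield) \<Rightarrow> (nat list \<Rightarrow> qfield) \<Rightarrow> bool" where
  "Veq r n v w \<longleftrightarrow> (\<lambda>b. v b - w b) \<in> relspan r n"

end

theory Submission
  imports Defs
begin

(* For k = 0 the formula is the defining relation at (r, l), solved for (r, l).
   Raising the first entry of every symbol maps relations to relations, so it acts on V_2;
   applied to the formula for k it yields (r + k + 1, l) as the same combination with first
   entries raised. Only the term with (r, l + k + 1) is not of the required shape, and expanding
   it by the case k = 0 gives the formula for k + 1. The coefficients match by a product identity
   for q-binomials which, after clearing factorials, is [a + m][b] + [m][a - b] = [a][b + m]. *)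

lemma qq_nonzero: "qq \<noteq> 0"
  by (simp add: qq_def Zero_fract_def eq_fract)

lemma qq_power_eq_1_iff: "qq ^ n = 1 \<longleftrightarrow> n = 0"
proof
  assume "qq ^ n = 1"
  moreover have "qq ^ n = Fract ([:0, 1:] ^ n) 1"
    by (induction n) (simp_all add: qq_def One_fract_def)
  ultimately have "([:0, 1:] :: rat poly) ^ n = 1"
    by (simp add: One_fract_def eq_fract)
  then have "degree (([:0, 1:] :: rat poly) ^ n) = 0" by simp
  then show "n = 0" by (simp add: degree_power_eq)
qed simp

lemma qint_nonzero:
  assumes "0 < n"
  shows "qint (int n) \<noteq> 0"
proof -
  have "qq ^ m - inverse (qq ^ m) \<noteq> 0" if "0 < m" for m
  proof
    assume "qq ^ m - inverse (qq ^ m) = 0"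
    then have "qq ^ (m + m) = 1"
      using qq_nonzero by (simp add: field_simps power_add)
    then show False using that by (simp add: qq_power_eq_1_iff)
  qed
  from this[of n] this[of 1] assms show ?thesis
    by (simp add: qint_def power_int_minus)
qed

lemma qint_add_mult:
  "qint (a + m) * qint b + qint m * qint (a - b) = qint a * qint (b + m)"
proof -
  define u v w where "u = qq powi a" and "v = qq powi b" and "w = qq powi m"
  have nonzero: "u \<noteq> 0" "v \<noteq> 0" "w \<noteq> 0"
    using qq_nonzero by (simp_all add: u_def v_def w_def)
  have powers: "qq powi (a + m) = u * w" "qq powi (b + m) = v * w" "qq powi (a - b) = u / v"
    using qq_nonzero by (simp_all add: u_def v_def w_def power_int_add power_int_diff)
  have numerators:
    "(u * w - inverse (u * w)) * (v - inverse v) + (w - inverse w) * (u / v - inverse (u / v))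
      = (u - inverse u) * (v * w - inverse (v * w))"
    using nonzero by (simp add: field_simps)
  show ?thesis
    unfolding qint_def power_int_minus powers u_def[symmetric] v_def[symmetric] w_def[symmetric]
    unfolding times_divide_times_eq add_divide_distrib[symmetric] numerators ..
qed

lemma qfact_Suc: "qfact (Suc n) = qfact n * qint (int (Suc n))"
  unfolding qfact_def by (simp add: prod.nat_ivl_Suc')

lemma qfact_nonzero: "qfact n \<noteq> 0"
  unfolding qfact_def using qint_nonzero by auto

lemma qfact_add: "qfact (m + n) = qfact m * (\<Prod>i<n. qint (int (m + n) - int i))"
proof (induction n)
  case (Suc n)
  have "int (m + Suc n) - int (Suc i) = int (m + n) - int i" for i
    by simp
  then have "(\<Prod>i<Suc n. qint (int (m + Suc n) - int i))
      = qint (int (Suc (m + n))) * (\<Prod>i<n. qint (int (m + n) - int i))"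
    by (simp only: prod.lessThan_Suc_shift) simp
  with Suc show ?case by (simp add: qfact_Suc)
qed simp

lemma qbinom_eq_qfact: "qbinom (int (m + n)) m = qfact (m + n) / (qfact m * qfact n)"
proof -
  have "qfact (m + n) = qfact n * (\<Prod>i<m. qint (int (m + n) - int i))"
    using qfact_add[of n m] by (simp add: add.commute)
  then show ?thesis
    using qfact_nonzero[of m] qfact_nonzero[of n] by (simp add: qbinom_def field_simps)
qed

lemma qbinom_0 [simp]: "qbinom a 0 = 1"
  by (simp add: qbinom_def qfact_def)

lemma qbinom_self [simp]: "qbinom (int n) n = 1"
  using qbinom_eq_qfact[of n 0] qfact_nonzero[of n] by (simp add: qfact_def)

lemma qbinom_symmetric: "qbinom (int (m + n)) m = qbinom (int (m + n)) n"
  using qbinom_eq_qfact[of m n] qbinom_eq_qfact[of n m] by (simp add: ac_simps)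

lemma qbinom_product_identity:
  "qbinom (int (i + k + 1)) i * qbinom (int (i + j + k + 3)) (j + 1)
     + qbinom (int (i + k + 1)) (i + 1) * qbinom (int (i + j + k + 2)) j
   = qbinom (int (i + j + k + 2)) (i + j + 1) * qbinom (int (i + j + 2)) (j + 1)"
proof -
  \<comment> \<open>A nat argument keeps simp normal forms of the shape qi (Suc n), where nonvanishing applies.\<close>
  define qi where "qi n = qint (int n)" for n
  have qfact_Suc': "qfact (Suc n) = qfact n * qi (Suc n)" for n
    unfolding qi_def by (rule qfact_Suc)
  have nonzero: "qfact n \<noteq> 0" "qi (Suc n) \<noteq> 0" for n
    unfolding qi_def by (simp_all add: qfact_nonzero qint_nonzero del: of_nat_Suc)
  have binoms:
    "qbinom (int (i + k + 1)) i = qfact (i + k + 1) / (qfact i * qfact (k + 1))"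
    "qbinom (int (i + j + k + 3)) (j + 1)
       = qfact (i + j + k + 3) / (qfact (j + 1) * qfact (i + k + 2))"
    "qbinom (int (i + k + 1)) (i + 1) = qfact (i + k + 1) / (qfact (i + 1) * qfact k)"
    "qbinom (int (i + j + k + 2)) j = qfact (i + j + k + 2) / (qfact j * qfact (i + k + 2))"
    "qbinom (int (i + j + k + 2)) (i + j + 1)
       = qfact (i + j + k + 2) / (qfact (i + j + 1) * qfact (k + 1))"
    "qbinom (int (i + j + 2)) (j + 1) = qfact (i + j + 2) / (qfact (j + 1) * qfact (i + 1))"
    using qbinom_eq_qfact[of i "k + 1"] qbinom_eq_qfact[of "j + 1" "i + k + 2"]
      qbinom_eq_qfact[of "i + 1" k] qbinom_eq_qfact[of j "i + k + 2"]
      qbinom_eq_qfact[of "i + j + 1" "k + 1"] qbinom_eq_qfact[of "j + 1" "i + 1"]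
    by (simp_all add: ac_simps eval_nat_numeral)
  have qints:
    "qi (i + j + k + 3) * qi (i + 1) + qi (k + 1) * qi (j + 1) = qi (i + j + 2) * qi (i + k + 2)"
    using qint_add_mult[of "int (i + j + 2)" "int (k + 1)" "int (i + 1)"]
    by (simp add: qi_def ac_simps)
  define D where
    "D = qfact i * qfact k * qfact j * qi (k + 1) * qi (j + 1) * qi (i + 1) * qi (i + k + 2)"
  have "qbinom (int (i + k + 1)) i * qbinom (int (i + j + k + 3)) (j + 1)
          + qbinom (int (i + k + 1)) (i + 1) * qbinom (int (i + j + k + 2)) j
        = qfact (i + j + k + 2)
            * (qi (i + j + k + 3) * qi (i + 1) + qi (k + 1) * qi (j + 1)) / D"
    unfolding binoms D_def using nonzero by (simp add: qfact_Suc' field_simps eval_nat_numeral)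
  also have "\<dots> = qfact (i + j + k + 2) * (qi (i + j + 2) * qi (i + k + 2)) / D"
    unfolding qints ..
  also have "\<dots> = qbinom (int (i + j + k + 2)) (i + j + 1) * qbinom (int (i + j + 2)) (j + 1)"
    unfolding binoms D_def using nonzero by (simp add: qfact_Suc' field_simps eval_nat_numeral)
  finally show ?thesis .
qed

definition expansion_coeff :: "nat \<Rightarrow> nat \<Rightarrow> nat \<Rightarrow> qfield" where
  "expansion_coeff r k s =
     (-1) ^ (s - 1) * qbinom (int (s + k - 1)) (s - 1) * qbinom (int (r + k)) (r - s)"

lemma expansion_coeff_0:
  assumes "1 \<le> s" "s \<le> r"
  shows "expansion_coeff r 0 s = (-1) ^ (s - 1) * qbinom (int r) s"
proof -
  define i j where "i = s - 1" and "j = r - s"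
  have "s = Suc i" "r = Suc i + j"
    using assms by (simp_all add: i_def j_def)
  then show ?thesis
    using qbinom_symmetric[of j "Suc i"] by (simp add: expansion_coeff_def add.commute)
qed

lemma expansion_coeff_Suc:
  assumes "1 \<le> s" "s \<le> r"
  shows "expansion_coeff r (Suc k) s
           = (if s < r then expansion_coeff r k (Suc s) else 0)
             + expansion_coeff r k 1 * expansion_coeff r 0 s"
proof (cases "s < r")
  case True
  define i j where "i = s - 1" and "j = r - s - 1"
  have ij: "s = i + 1" "r = i + j + 2"
    using assms True by (simp_all add: i_def j_def)
  have coeffs: "expansion_coeff r (Suc k) s
          = (-1) ^ i * (qbinom (int (i + k + 1)) i * qbinom (int (i + j + k + 3)) (j + 1))"
       "expansion_coeff r k (Suc s)
          = - ((-1) ^ i * (qbinom (int (i + k + 1)) (i + 1) * qbinom (int (i + j + k + 2)) j))"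
       "expansion_coeff r k 1 * expansion_coeff r 0 s
          = (-1) ^ i * (qbinom (int (i + j + k + 2)) (i + j + 1) * qbinom (int (i + j + 2)) (j + 1))"
    unfolding expansion_coeff_def ij by (simp_all add: ac_simps)
  show ?thesis
    using True unfolding coeffs qbinom_product_identity[symmetric] by (simp add: algebra_simps)
next
  case False
  define i where "i = s - 1"
  have "s = Suc i" "r = Suc i"
    using assms False by (simp_all add: i_def)
  then show ?thesis by (simp add: expansion_coeff_def)
qed

lemma Veq_trans [trans]: "Veq r n u v \<Longrightarrow> Veq r n v w \<Longrightarrow> Veq r n u w"
  unfolding Veq_def by (drule (1) relspan.add) simp

lemma Veq_scale_add:
  "Veq r n v w \<Longrightarrow> Veq r n (\<lambda>b. c * v b + h b) (\<lambda>b. c * w b + h b)"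
  unfolding Veq_def by (drule relspan.smult[of _ r n c]) (simp add: algebra_simps)

lemma Veq_vsym_relation:
  assumes "length a = n" "Suc i < n" "r \<le> a ! i"
  shows "Veq r n (vsym a)
           (\<lambda>b. \<Sum>j = 1..r. (-1) ^ (j - 1) * qbinom (int r) j * vsym (shift a i j) b)"
proof -
  define rest where
    "rest b = (\<Sum>j = 1..r. (-1) ^ (j - 1) * qbinom (int r) j * vsym (shift a i j) b)" for b
  have "relvec r a i = (\<lambda>b. vsym a b - rest b)"
  proof
    fix b
    have "{..r} = insert 0 {1..r}" by auto
    moreover have "shift a i 0 = a" by (simp add: shift_def)
    moreover have "(-1 :: qfield) ^ j = - ((-1) ^ (j - 1))" if "1 \<le> j" for j
      using that by (cases j) auto
    ultimately show "relvec r a i b = vsym a b - rest b"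
      unfolding relvec_def rest_def by (simp add: sum_negf[symmetric])
  qed
  with relspan.rel[OF assms] show ?thesis
    unfolding Veq_def rest_def by simp
qed

definition raise_hd :: "(nat list \<Rightarrow> qfield) \<Rightarrow> nat list \<Rightarrow> qfield" where
  "raise_hd v b =
     (case b of [] \<Rightarrow> 0 | x # xs \<Rightarrow> if x = 0 then 0 else v ((x - 1) # xs))"

lemma raise_hd_vsym: "raise_hd (vsym (x # xs)) = vsym (Suc x # xs)"
  by (auto simp: raise_hd_def vsym_def fun_eq_iff split: list.split)

lemma raise_hd_lincomb:
  "raise_hd (\<lambda>b. \<Sum>j\<in>A. c j * v j b) = (\<lambda>b. \<Sum>j\<in>A. c j * raise_hd (v j) b)"
  by (simp add: raise_hd_def fun_eq_iff split: list.split)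

lemma raise_hd_zero: "raise_hd (\<lambda>b. 0) = (\<lambda>b. 0)"
  by (simp add: raise_hd_def fun_eq_iff split: list.split)

lemma raise_hd_add: "raise_hd (\<lambda>b. v b + w b) = (\<lambda>b. raise_hd v b + raise_hd w b)"
  by (simp add: raise_hd_def fun_eq_iff split: list.split)

lemma raise_hd_scale: "raise_hd (\<lambda>b. c * v b) = (\<lambda>b. c * raise_hd v b)"
  by (simp add: raise_hd_def fun_eq_iff split: list.split)

lemma raise_hd_diff: "raise_hd (\<lambda>b. v b - w b) = (\<lambda>b. raise_hd v b - raise_hd w b)"
  by (simp add: raise_hd_def fun_eq_iff split: list.split)

lemma raise_hd_relvec:
  assumes "i = 0 \<Longrightarrow> r \<le> x"
  shows "raise_hd (relvec r (x # xs) i) = relvec r (Suc x # xs) i"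
proof -
  have "raise_hd (vsym (shift (x # xs) i j)) = vsym (shift (Suc x # xs) i j)"
    if "j \<le> r" for j
    using assms that by (cases i) (simp_all add: shift_def raise_hd_vsym Suc_diff_le)
  then show ?thesis
    unfolding relvec_def raise_hd_lincomb by simp
qed

lemma relspan_raise_hd: "v \<in> relspan r n \<Longrightarrow> raise_hd v \<in> relspan r n"
proof (induction rule: relspan.induct)
  case zero
  then show ?case unfolding raise_hd_zero by (rule relspan.zero)
next
  case (rel a i)
  then obtain x xs where "a = x # xs" by (cases a) auto
  with rel show ?case
    using relspan.rel[of "Suc x # xs" n i r] by (cases i) (simp_all add: raise_hd_relvec)
next
  case (add v w)
  show ?case unfolding raise_hd_add by (rule relspan.add[OF add.IH])
next
  case (smult v c)
  show ?case unfolding raise_hd_scale by (rule relspan.smult[OF smult.IH])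
qed

lemma Veq_raise_hd: "Veq r n v w \<Longrightarrow> Veq r n (raise_hd v) (raise_hd w)"
  unfolding Veq_def raise_hd_diff[symmetric] by (rule relspan_raise_hd)

lemma Veq_expansion_0:
  "Veq r 2 (vsym [r, l]) (\<lambda>b. \<Sum>s = 1..r. expansion_coeff r 0 s * vsym [r - s, l + s] b)"
proof -
  have "shift [r, l] 0 s = [r - s, l + s]" for s
    by (simp add: shift_def)
  moreover have "(\<lambda>b. \<Sum>s = 1..r. expansion_coeff r 0 s * vsym [r - s, l + s] b)
      = (\<lambda>b. \<Sum>s = 1..r. (-1) ^ (s - 1) * qbinom (int r) s * vsym [r - s, l + s] b)"
    by (intro ext sum.cong) (simp_all add: expansion_coeff_0)
  ultimately show ?thesis
    using Veq_vsym_relation[of "[r, l]" 2 0 r] by simp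
qed

lemma sum_atLeastAtMost_split_first:
  assumes "0 < r"
  shows "(\<Sum>s = 1..r. g s) = g 1 + (\<Sum>s\<in>{1..<r}. g (Suc s))"
proof -
  have "1 < Suc r" using assms by simp
  moreover have "sum g {Suc 1..<Suc r} = (\<Sum>s\<in>{1..<r}. g (Suc s))"
    by (simp only: sum.atLeast_Suc_lessThan_Suc_shift comp_def)
  ultimately show ?thesis
    by (metis sum.atLeast_Suc_lessThan atLeastLessThanSuc_atLeastAtMost)
qed

lemma raise_hd_expansion:
  assumes "0 < r"
  shows "raise_hd (\<lambda>b. \<Sum>s = 1..r. c s * vsym [r - s, f s] b)
           = (\<lambda>b. c 1 * vsym [r, f 1] b
                   + (\<Sum>s\<in>{1..<r}. c (Suc s) * vsym [r - s, f (Suc s)] b))"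
  unfolding raise_hd_lincomb raise_hd_vsym
  unfolding sum_atLeastAtMost_split_first[OF assms]
  using assms by (simp add: Suc_diff_Suc)

lemma sum_expansion_coeff_Suc:
  "(\<Sum>s = 1..r. expansion_coeff r (Suc k) s * x s)
     = (\<Sum>s\<in>{1..<r}. expansion_coeff r k (Suc s) * x s)
       + expansion_coeff r k 1 * (\<Sum>s = 1..r. expansion_coeff r 0 s * x s)"
proof -
  have "{1..<r} = {s \<in> {1..r}. s < r}" by auto
  then have tail: "(\<Sum>s\<in>{1..<r}. expansion_coeff r k (Suc s) * x s)
      = (\<Sum>s = 1..r. if s < r then expansion_coeff r k (Suc s) * x s else 0)"
    by (simp only: sum.inter_filter[OF finite_atLeastAtMost])
  show ?thesis
    unfolding tail sum_distrib_left sum.distrib[symmetric]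
    by (rule sum.cong) (simp_all add: expansion_coeff_Suc algebra_simps)
qed

lemma Veq_expansion:
  assumes "0 < r"
  shows "Veq r 2 (vsym [r + k, l])
           (\<lambda>b. \<Sum>s = 1..r. expansion_coeff r k s * vsym [r - s, l + s + k] b)"
proof (induction k arbitrary: l)
  case 0
  show ?case using Veq_expansion_0[of r l] by simp
next
  case (Suc k)
  define V where "V s = vsym [r - s, l + s + Suc k]" for s
  define tail where "tail b = (\<Sum>s\<in>{1..<r}. expansion_coeff r k (Suc s) * V s b)" for b
  have "Veq r 2 (vsym [r + Suc k, l])
          (raise_hd (\<lambda>b. \<Sum>s = 1..r. expansion_coeff r k s * vsym [r - s, l + s + k] b))"
    using Veq_raise_hd[OF Suc.IH] unfolding raise_hd_vsym by simp
  also have "\<dots> = (\<lambda>b. expansion_coeff r k 1 * vsym [r, l + Suc k] b + tail b)"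
    unfolding raise_hd_expansion[OF assms] tail_def V_def by simp
  also have "Veq r 2 \<dots>
      (\<lambda>b. expansion_coeff r k 1 * (\<Sum>s = 1..r. expansion_coeff r 0 s * V s b) + tail b)"
    using Veq_scale_add[OF Veq_expansion_0[of r "l + Suc k"], of "expansion_coeff r k 1" tail]
    unfolding V_def by (simp add: ac_simps)
  also have "\<dots> = (\<lambda>b. \<Sum>s = 1..r. expansion_coeff r (Suc k) s * V s b)"
    unfolding tail_def sum_expansion_coeff_Suc by (simp add: add.commute)
  finally show ?case unfolding V_def .
qed

theorem proposition5p4:
  fixes r k l :: nat
  assumes "r \<ge> 2"
  shows "Veq r 2 (vsym [r + k, l])
           (\<lambda>b. \<Sum>s = 1..r. (-1) ^ (s - 1) * qbinom (int (s + k - 1)) (s - 1)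
                      * qbinom (int (r + k)) (r - s) * vsym [r - s, l + s + k] b)"
  using Veq_expansion[of r k l] assms unfolding expansion_coeff_def by simp

end
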